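(* Assume the standing setting and let $K\subset\Omega$ be compact. Then there exist positive constants $C_K$ and $T_K$ such that $$|\varphi(t,x)|\ge C_K\,|t|^{2/(m+2)}\qquad\text{for all }x\in K\text{ and all real }t\text{ with }|t|\ge T_K.$$
   Context: Let $Q$ be a complex polynomial of degree $m\ge 1$. A turning point is a zero of $Q$. For a turning point $a$, $\mathfrak S_a(x)=\int_a^x\sqrt{Q(\tau)}\,d\tau$. The Stokes curves emanating from a turning point $a$ are the arcs of $\{x:\operatorname{Im}\mathfrak S_a(x)=0\}$ starting at $a$; each ends at $\infty$ or at another turning point (a Stokes curve ending at a turning point $b$ is joined with the Stokes curves emanating from $b$). The Stokes curves divide $\mathbb C$ into regions called Stokes domains. Standing setting: $\Omega$ is a Stokes domain, $a\in\partial\Omega$ is a turning point, a holomorphic branch of $\sqrt Q$ on $\Omega$ is fixed so that $\mathfrak S_a$ is holomorphic on $\Omega$ with $\mathfrak S_a'=\sqrt Q$, and $\operatorname{Im}\mathfrak S_a(x)>0$ for all $x\in\Omega$. Moreover $\Omega$ is of one of two types: type (1): $\partial\Omega$ is a single connected curve containing $a$, and $\operatorname{Im}\mathfrak S_a=0$ on $\partial\Omega$; type (2): $\partial\Omega=\mathcal C_1\cup\mathcal C_2$ with $\mathcal C_1\cap\mathcal C_2=\emptyset$, there are turning points $a\in\mathcal C_1$, $b\in\mathcal C_2$, $\operatorname{Im}\mathfrak S_a=0$ on $\mathcal C_1$ and $\operatorname{Im}\mathfrak S_a=\operatorname{Im}\mathfrak S_a(b)$ on $\mathcal C_2$. For $x\in\Omega$,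 $\varphi(z,x)$ denotes the solution of $\frac{dy}{dz}=\frac{1}{\sqrt{Q(y)}}$, $y(0)=x$ (with the fixed branch); it satisfies $\mathfrak S_a(\varphi(z,x))=\mathfrak S_a(x)+z$, and for $x\in\Omega$ it exists for all real $z=t$. *)

theory Defs
  imports "HOL-Complex_Analysis.Complex_Analysis" "HOL-Computational_Algebra.Polynomial"
begin

definition turning_point :: "complex poly \<Rightarrow> complex \<Rightarrow> bool" where
  "turning_point Q a \<longleftrightarrow> poly Q a = 0"

text \<open>A point x lies on a Stokes curve (possibly a
  chain of Stokes curves joined at turning points) iff it can be reached from a
  turning point a by a C1 path gamma along which the primitive of sqrt(Q) stays
  real, i.e. Q(gamma t) * gamma'(t)^2 is a nonnegative real number for all t
  (so that Im of the integral of sqrt(Q) from a along gamma is identically 0).\<close>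
definition stokes_set :: "complex poly \<Rightarrow> complex set" where
  "stokes_set Q = {x. \<exists>a \<gamma>. turning_point Q a \<and>
      \<gamma> C1_differentiable_on {0..1} \<and> \<gamma> 0 = a \<and> \<gamma> 1 = x \<and>
      (\<forall>t\<in>{0..1::real}.
         let w = poly Q (\<gamma> t) * (vector_derivative \<gamma> (at t within {0..1}))\<^sup>2
         in Im w = 0 \<and> Re w \<ge> 0)}"

definition stokes_domain :: "complex poly \<Rightarrow> complex set \<Rightarrow> bool" where
  "stokes_domain Q \<Omega> \<longleftrightarrow> \<Omega> \<in> components (- stokes_set Q)"

definition is_flow :: "(complex \<Rightarrow> complex) \<Rightarrow> complex set \<Rightarrow> (real \<Rightarrow> complex \<Rightarrow> complex) \<Rightarrow> bool" where
  "is_flow sq \<Omega> \<phi> \<longleftrightarrow> (\<forall>x\<in>\<Omega>. \<phi> 0 x = x \<and>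
      (\<forall>t. \<phi> t x \<in> \<Omega> \<and> ((\<lambda>s. \<phi> s x) has_vector_derivative (1 / sq (\<phi> t x))) (at t)))"

end

theory Submission
  imports Defs
begin

(* Along an orbit y(t) = phi(t,x) we have y'^2 Q(y) = 1, and for large |y| the polynomial Q(y) is
   close to c y^m, c the leading coefficient. A continuous branch Z of y^((m+2)/2) along the orbit
   therefore has Z'^2 = ((m+2)/2)^2 y^m y'^2 close to the constant ((m+2)/2)^2 / c. By connectedness
   Z' keeps a positive component in the direction of one fixed square root of that constant, so
   |Z| = |y|^((m+2)/2) grows at least linearly in time as long as the orbit stays outside a large
   ball.
   Orbits starting in K leave every ball cball 0 R after a uniform time, because S(phi(t,x)) = S(x) + t
   while S is bounded on the compact set closure Omega \<inter> cball 0 R. Running the growth estimate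
   from the last exit time from the ball gives |phi(t,x)|^((m+2)/2) >= const * |t| for large |t|. *)

lemma abs_Re_cnj_mult_le: "\<bar>Re (cnj w * z)\<bar> \<le> norm w * norm z"
  using abs_Re_le_cmod[of "cnj w * z"] by (simp add: norm_mult)

lemma Re_cnj_mult_far_from_zero_if_square_near:
  fixes u w :: complex
  assumes "norm (u ^ 2 - w ^ 2) \<le> norm w ^ 2 / 4"
  shows "norm w ^ 2 / 2 \<le> Re (cnj w * u) \<or> Re (cnj w * u) \<le> - (norm w ^ 2 / 2)"
proof -
  have "norm (u - w) * norm (u + w) \<le> norm w ^ 2 / 4"
    using assms by (simp add: power2_eq_square algebra_simps flip: norm_mult)
  then have "norm (u - w) \<le> norm w / 2 \<or> norm (u + w) \<le> norm w / 2"
  proof (rule contrapos_pp)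
    assume "\<not> (norm (u - w) \<le> norm w / 2 \<or> norm (u + w) \<le> norm w / 2)"
    then have "norm w / 2 * (norm w / 2) < norm (u - w) * norm (u + w)"
      by (intro mult_strict_mono) auto
    then show "\<not> norm (u - w) * norm (u + w) \<le> norm w ^ 2 / 4"
      by (simp add: power2_eq_square)
  qed
  moreover have "Re (cnj w * w) = norm w ^ 2"
    unfolding cmod_power2 by (simp add: power2_eq_square)
  moreover have "Re (cnj w * u) = norm w ^ 2 + Re (cnj w * (u - w))"
    "Re (cnj w * u) = Re (cnj w * (u + w)) - norm w ^ 2"
    using \<open>Re (cnj w * w) = norm w ^ 2\<close> by (simp_all add: algebra_simps)
  moreover have "norm w * norm (u - w) \<le> norm w ^ 2 / 2" if "norm (u - w) \<le> norm w / 2"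
    using mult_left_mono[OF that norm_ge_zero] by (simp add: power2_eq_square)
  moreover have "norm w * norm (u + w) \<le> norm w ^ 2 / 2" if "norm (u + w) \<le> norm w / 2"
    using mult_left_mono[OF that norm_ge_zero] by (simp add: power2_eq_square)
  ultimately show ?thesis
    using abs_Re_cnj_mult_le[of w "u - w"] abs_Re_cnj_mult_le[of w "u + w"] by linarith
qed

lemma continuous_near_square_root_has_constant_sign:
  fixes u :: "real \<Rightarrow> complex"
  assumes I: "connected I" and u: "continuous_on I u"
    and near: "\<And>s. s \<in> I \<Longrightarrow> norm (u s ^ 2 - w ^ 2) \<le> norm w ^ 2 / 4"
  obtains w' where "norm w' = norm w" "\<And>s. s \<in> I \<Longrightarrow> norm w ^ 2 / 2 \<le> Re (cnj w' * u s)"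
proof (cases "w = 0")
  case True
  then show thesis by (intro that[of 0]) auto
next
  case False
  define g where "g s = Re (cnj w * u s)" for s
  have g: "norm w ^ 2 / 2 \<le> g s \<or> g s \<le> - (norm w ^ 2 / 2)" if "s \<in> I" for s
    unfolding g_def by (rule Re_cnj_mult_far_from_zero_if_square_near[OF near[OF that]])
  with False have "0 \<notin> g ` I"
    by fastforce
  moreover have "connected (g ` I)"
    unfolding g_def using I u by (intro connected_continuous_image continuous_intros)
  ultimately have "(\<forall>s\<in>I. 0 < g s) \<or> (\<forall>s\<in>I. g s < 0)"
    using connectedD_interval[of "g ` I", OF _ imageI imageI] by (meson linorder_not_le)
  then show thesis
  proof
    assume "\<forall>s\<in>I. 0 < g s"
    with g show thesis
      using that[of w] unfolding g_def by force
  next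
    assume "\<forall>s\<in>I. g s < 0"
    with g show thesis
      using that[of "- w"] unfolding g_def by force
  qed
qed

lemma norm_linear_growth_if_derivative_near_root:
  fixes Z u :: "real \<Rightarrow> complex"
  assumes "\<tau> \<le> t"
    and Z: "\<And>s. s \<in> {\<tau>..t} \<Longrightarrow> (Z has_vector_derivative u s) (at s within {\<tau>..t})"
    and u: "continuous_on {\<tau>..t} u"
    and near: "\<And>s. s \<in> {\<tau>..t} \<Longrightarrow> norm (u s ^ 2 - w ^ 2) \<le> norm w ^ 2 / 4"
  shows "norm w / 2 * (t - \<tau>) \<le> norm (Z t) + norm (Z \<tau>)"
proof -
  obtain w' where w': "norm w' = norm w" "\<And>s. s \<in> {\<tau>..t} \<Longrightarrow> norm w ^ 2 / 2 \<le> Re (cnj w' * u s)"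
    using continuous_near_square_root_has_constant_sign[OF connected_Icc u near] by blast
  define h where "h s = Re (cnj w' * Z s)" for s
  have h': "(h has_derivative (\<lambda>d. d * Re (cnj w' * u s))) (at s within {\<tau>..t})" if "s \<in> {\<tau>..t}" for s
    using bounded_linear.has_vector_derivative[OF bounded_linear_Re
        has_vector_derivative_mult_right[OF Z[OF that], of "cnj w'"]]
    unfolding h_def has_vector_derivative_def by (simp add: mult.commute)
  obtain \<xi> where \<xi>: "\<xi> \<in> {\<tau>..t}" "h t - h \<tau> = (t - \<tau>) * Re (cnj w' * u \<xi>)"
    using mvt_very_simple[OF \<open>\<tau> \<le> t\<close>, of h "\<lambda>s d. d * Re (cnj w' * u s)"] h' by auto
  have "norm w * (norm w / 2 * (t - \<tau>)) = norm w ^ 2 / 2 * (t - \<tau>)"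
    by (simp add: power2_eq_square)
  also have "\<dots> \<le> Re (cnj w' * u \<xi>) * (t - \<tau>)"
    using w'(2)[OF \<xi>(1)] \<open>\<tau> \<le> t\<close> by (intro mult_right_mono) auto
  also have "\<dots> = h t - h \<tau>"
    using \<xi>(2) by (simp only: mult.commute)
  also have "\<dots> \<le> norm w * (norm (Z t) + norm (Z \<tau>))"
    using abs_Re_cnj_mult_le[of w' "Z t"] abs_Re_cnj_mult_le[of w' "Z \<tau>"]
    unfolding h_def w'(1) by (simp add: algebra_simps)
  finally show ?thesis
    by (cases "w = 0") (use \<open>\<tau> \<le> t\<close> in auto)
qed

lemma has_vector_derivative_exp:
  fixes f :: "real \<Rightarrow> 'a::{real_normed_field,banach}"
  assumes "(f has_vector_derivative f') (at s within S)"
  shows "((\<lambda>s. exp (f s)) has_vector_derivative f' * exp (f s)) (at s within S)"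
  using field_vector_diff_chain_within[OF assms has_field_derivative_at_within[OF DERIV_exp]]
  by (simp add: o_def)

lemma exists_sqrt_power_along_path:
  fixes y v :: "real \<Rightarrow> complex" and n :: nat
  assumes y: "\<And>s. s \<in> {a..b} \<Longrightarrow> (y has_vector_derivative v s) (at s within {a..b})"
    and v: "continuous_on {a..b} v" and nonzero: "\<And>s. s \<in> {a..b} \<Longrightarrow> y s \<noteq> 0"
  obtains Z where "\<And>s. s \<in> {a..b} \<Longrightarrow> Z s ^ 2 = y s ^ n"
    "\<And>s. s \<in> {a..b} \<Longrightarrow> (Z has_vector_derivative of_nat n / 2 * Z s * v s / y s) (at s within {a..b})"
proof (cases "a \<le> b")
  case False
  then show thesis by (intro that) auto
next
  case True
  define L where "L s = integral {a..s} (\<lambda>r. v r / y r)" for s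
  have "continuous_on {a..b} y"
    using y by (rule continuous_on_vector_derivative)
  then have "continuous_on {a..b} (\<lambda>r. v r / y r)"
    using v nonzero by (intro continuous_intros) auto
  then have L: "(L has_vector_derivative v s / y s) (at s within {a..b})" if "s \<in> {a..b}" for s
    unfolding L_def using that by (rule integral_has_vector_derivative)
  have "((\<lambda>s. y s * exp (- L s)) has_vector_derivative 0) (at s within {a..b})" if s: "s \<in> {a..b}" for s
    using has_vector_derivative_mult[OF y[OF s] has_vector_derivative_exp[OF has_vector_derivative_minus[OF L[OF s]]]]
      nonzero[OF s]
    by (simp add: field_simps)
  then obtain C where "\<And>s. s \<in> {a..b} \<Longrightarrow> y s * exp (- L s) = C"
    using has_vector_derivative_zero_constant[of "{a..b}"] by blast
  moreover have "L a = 0" unfolding L_def by simp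
  ultimately have y_exp_minus: "y s * exp (- L s) = y a" if "s \<in> {a..b}" for s
    using that True by fastforce
  have y_exp: "y s = y a * exp (L s)" if "s \<in> {a..b}" for s
  proof -
    have "y s = y s * exp (- L s) * exp (L s)"
      by (simp add: mult.assoc flip: exp_add)
    then show ?thesis
      using y_exp_minus[OF that] by simp
  qed
  \<comment> \<open>L is a logarithm of y s / y a along the path, so Z is a branch of (y s)^(n/2).\<close>
  define Z where "Z s = csqrt (y a ^ n) * exp (of_nat n / 2 * L s)" for s
  show thesis
  proof
    fix s assume s: "s \<in> {a..b}"
    have "Z s ^ 2 = y a ^ n * exp (of_nat n * L s)"
      unfolding Z_def power_mult_distrib power2_csqrt exp_of_nat_mult[of 2, symmetric] by simp
    also have "\<dots> = y s ^ n"
      by (simp add: y_exp[OF s] exp_of_nat_mult power_mult_distrib)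
    finally show "Z s ^ 2 = y s ^ n" .
    show "(Z has_vector_derivative of_nat n / 2 * Z s * v s / y s) (at s within {a..b})"
      using has_vector_derivative_mult_right[OF has_vector_derivative_exp[OF
            has_vector_derivative_mult_right[OF L[OF s], of "of_nat n / 2"]], of "csqrt (y a ^ n)"]
      unfolding Z_def[abs_def] by (simp add: field_simps)
  qed
qed

lemma norm_eq_powr_if_square_eq_power:
  fixes z y :: complex
  assumes "z ^ 2 = y ^ n" "y \<noteq> 0"
  shows "norm z = norm y powr (n / 2)"
proof (rule power2_eq_imp_eq)
  have "(norm y powr (n / 2)) ^ 2 = norm y powr (n / 2 + n / 2)"
    by (simp add: power2_eq_square flip: powr_add)
  also have "\<dots> = norm y ^ n"
    using assms(2) by (simp add: powr_realpow)
  finally show "norm z ^ 2 = (norm y powr (n / 2)) ^ 2"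
    using assms(1) by (simp flip: norm_power)
qed auto

lemma norm_powr_linear_growth:
  fixes y v :: "real \<Rightarrow> complex" and w :: complex and m :: nat
  assumes "\<tau> \<le> t"
    and y: "\<And>s. s \<in> {\<tau>..t} \<Longrightarrow> (y has_vector_derivative v s) (at s within {\<tau>..t})"
    and v: "continuous_on {\<tau>..t} v"
    and nonzero: "\<And>s. s \<in> {\<tau>..t} \<Longrightarrow> y s \<noteq> 0"
    and near: "\<And>s. s \<in> {\<tau>..t} \<Longrightarrow> norm (y s ^ m * v s ^ 2 - w ^ 2) \<le> norm w ^ 2 / 4"
  shows "(real m + 2) / 4 * norm w * (t - \<tau>)
           \<le> norm (y t) powr ((real m + 2) / 2) + norm (y \<tau>) powr ((real m + 2) / 2)"
proof -
  obtain Z where Z2: "\<And>s. s \<in> {\<tau>..t} \<Longrightarrow> Z s ^ 2 = y s ^ (m + 2)"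
    and Z': "\<And>s. s \<in> {\<tau>..t} \<Longrightarrow>
      (Z has_vector_derivative of_nat (m + 2) / 2 * Z s * v s / y s) (at s within {\<tau>..t})"
    using exists_sqrt_power_along_path[OF y v nonzero] by metis
  define k :: complex where "k = of_nat (m + 2) / 2"
  define u where "u s = k * Z s * v s / y s" for s
  have "continuous_on {\<tau>..t} Z"
    using Z' by (rule continuous_on_vector_derivative)
  then have "continuous_on {\<tau>..t} u"
    using continuous_on_vector_derivative[OF y] v nonzero unfolding u_def
    by (intro continuous_intros) auto
  moreover have "norm (u s ^ 2 - (k * w) ^ 2) \<le> norm (k * w) ^ 2 / 4" if s: "s \<in> {\<tau>..t}" for s
  proof -
    have "u s ^ 2 = k ^ 2 * (y s ^ m * v s ^ 2)"
      using Z2[OF s] nonzero[OF s] unfolding u_def by (simp add: field_simps power2_eq_square)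
    then have "norm (u s ^ 2 - (k * w) ^ 2) = norm k ^ 2 * norm (y s ^ m * v s ^ 2 - w ^ 2)"
      by (simp add: power_mult_distrib norm_mult norm_power flip: right_diff_distrib)
    also have "\<dots> \<le> norm k ^ 2 * (norm w ^ 2 / 4)"
      using near[OF s] by (intro mult_left_mono) auto
    finally show ?thesis by (simp add: norm_mult power_mult_distrib)
  qed
  ultimately have "norm (k * w) / 2 * (t - \<tau>) \<le> norm (Z t) + norm (Z \<tau>)"
    using \<open>\<tau> \<le> t\<close> Z' unfolding u_def k_def
    by (intro norm_linear_growth_if_derivative_near_root) auto
  moreover have "norm (Z s) = norm (y s) powr ((real m + 2) / 2)" if "s \<in> {\<tau>..t}" for s
    using norm_eq_powr_if_square_eq_power[OF Z2 nonzero, OF that that] by (simp add: add.commute)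
  moreover have "norm k = (real m + 2) / 2"
    unfolding k_def norm_divide norm_of_nat by simp
  ultimately show ?thesis
    using \<open>\<tau> \<le> t\<close> by (simp add: norm_mult)
qed

lemma last_exit_from_cball:
  fixes y :: "real \<Rightarrow> 'a::real_normed_vector"
  assumes y: "continuous_on {a..b} y" and "a \<le> b"
    and start: "norm (y a) \<le> R" and stop: "R < norm (y b)"
  obtains \<tau> where "\<tau> \<in> {a..<b}" "norm (y \<tau>) = R" "\<And>s. s \<in> {\<tau>..b} \<Longrightarrow> R \<le> norm (y s)"
proof -
  have norm_y: "continuous_on {a..b} (\<lambda>s. norm (y s))"
    using y by (intro continuous_intros)
  define P where "P = {a..b} \<inter> (\<lambda>s. norm (y s)) -` {..R}"
  define \<tau> where "\<tau> = Sup P"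
  have "closed P"
    unfolding P_def using norm_y by (intro continuous_closed_preimage) auto
  moreover have "a \<in> P" "bdd_above P"
    using start \<open>a \<le> b\<close> unfolding P_def by auto
  ultimately have "\<tau> \<in> P"
    unfolding \<tau>_def by (intro closed_contains_Sup) auto
  then have \<tau>: "\<tau> \<in> {a..<b}" "norm (y \<tau>) \<le> R"
    using stop unfolding P_def by (auto simp: less_eq_real_def)
  have "R \<le> norm (y s)" if "s \<in> {\<tau><..b}" for s
    using that cSup_upper[OF _ \<open>bdd_above P\<close>, of s] \<tau>(1) unfolding P_def \<tau>_def by force
  then have "closure {\<tau><..b} \<subseteq> {a..b} \<inter> (\<lambda>s. norm (y s)) -` {R..}"
    using \<tau>(1) norm_y by (intro closure_minimal continuous_closed_preimage) auto
  then have "R \<le> norm (y s)" if "s \<in> {\<tau>..b}" for s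
    using that \<tau>(1) by auto
  with \<tau> show thesis
    by (intro that[of \<tau>]) (auto intro: order.antisym)
qed

lemma poly_power_ratio_tendsto:
  fixes Q :: "'a::real_normed_field poly"
  assumes "Q \<noteq> 0"
  shows "((\<lambda>z. z ^ degree Q / poly Q z) \<longlongrightarrow> 1 / lead_coeff Q) at_infinity"
  using tendsto_inverse[OF poly_divide_tendsto_aux[of Q]] assms by (simp add: inverse_eq_divide)

lemma stokes_domain_avoids_turning_points:
  assumes "stokes_domain Q \<Omega>" "x \<in> \<Omega>"
  shows "poly Q x \<noteq> 0"
proof
  assume "poly Q x = 0"
  then have "x \<in> stokes_set Q"
    unfolding stokes_set_def turning_point_def
    by (intro CollectI exI[of _ x] exI[of _ "\<lambda>_. x"]) (simp add: Let_def)
  moreover have "\<Omega> \<subseteq> - stokes_set Q"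
    using assms(1) unfolding stokes_domain_def by (rule in_components_subset)
  ultimately show False
    using assms(2) by blast
qed

lemma is_flow_primitive_shift:
  assumes flow: "is_flow sq \<Omega> \<phi>"
    and S: "\<And>z. z \<in> \<Omega> \<Longrightarrow> (S has_field_derivative sq z) (at z)"
    and sq: "\<And>z. z \<in> \<Omega> \<Longrightarrow> sq z \<noteq> 0"
    and x: "x \<in> \<Omega>"
  shows "S (\<phi> t x) = S x + of_real t"
proof -
  have derivative_zero: "((\<lambda>s. S (\<phi> s x) - of_real s) has_vector_derivative 0) (at s within UNIV)" for s
  proof -
    have "\<phi> s x \<in> \<Omega>" and \<phi>': "((\<lambda>s. \<phi> s x) has_vector_derivative 1 / sq (\<phi> s x)) (at s)"
      using flow x unfolding is_flow_def by auto
    then have "((\<lambda>s. S (\<phi> s x)) has_vector_derivative 1) (at s)"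
      using field_vector_diff_chain_at[OF \<phi>' S] sq by (simp add: o_def)
    from has_vector_derivative_diff[OF this has_vector_derivative_of_real[OF DERIV_ident]]
    show ?thesis by simp
  qed
  obtain C where C: "\<And>s. s \<in> UNIV \<Longrightarrow> S (\<phi> s x) - of_real s = C"
    using has_vector_derivative_zero_constant[OF convex_UNIV derivative_zero] by blast
  have "\<phi> 0 x = x"
    using flow x unfolding is_flow_def by blast
  with C[of t] C[of 0] show ?thesis
    by (simp add: algebra_simps)
qed

lemma is_flow_time_bound_in_ball:
  assumes flow: "is_flow sq \<Omega> \<phi>"
    and S: "\<And>z. z \<in> \<Omega> \<Longrightarrow> (S has_field_derivative sq z) (at z)" "continuous_on (closure \<Omega>) S"
    and sq: "\<And>z. z \<in> \<Omega> \<Longrightarrow> sq z \<noteq> 0"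
    and K: "compact K" "K \<subseteq> \<Omega>"
  obtains T where "0 \<le> T" "\<And>x s. x \<in> K \<Longrightarrow> norm (\<phi> s x) \<le> R \<Longrightarrow> \<bar>s\<bar> \<le> T"
proof -
  define L where "L = (closure \<Omega> \<inter> cball 0 R) \<union> K"
  have "L \<subseteq> closure \<Omega>"
    using K(2) closure_subset unfolding L_def by blast
  moreover have "compact L"
    unfolding L_def using K(1) by (intro compact_Un closed_Int_compact) auto
  ultimately have "bounded (S ` L)"
    by (intro compact_imp_bounded compact_continuous_image continuous_on_subset[OF S(2)])
  then obtain M where "0 < M" and M: "\<And>z. z \<in> L \<Longrightarrow> norm (S z) \<le> M"
    unfolding bounded_pos by blast
  show thesis
  proof (rule that[of "2 * M"])
    show "0 \<le> 2 * M"
      using \<open>0 < M\<close> by simp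
  next
    fix x s assume x: "x \<in> K" and "norm (\<phi> s x) \<le> R"
    moreover have "x \<in> \<Omega>"
      using x K(2) by blast
    moreover have "\<phi> s x \<in> \<Omega>"
      using flow \<open>x \<in> \<Omega>\<close> unfolding is_flow_def by blast
    ultimately have "\<phi> s x \<in> L" "x \<in> L" "x \<in> \<Omega>"
      using closure_subset unfolding L_def by auto
    then have "\<bar>s\<bar> = norm (S (\<phi> s x) - S x)"
      using is_flow_primitive_shift[OF flow S(1) sq] by simp
    also have "\<dots> \<le> 2 * M"
      using M[OF \<open>\<phi> s x \<in> L\<close>] M[OF \<open>x \<in> L\<close>] norm_triangle_ineq4[of "S (\<phi> s x)" "S x"] by linarith
    finally show "\<bar>s\<bar> \<le> 2 * M" .
  qed
qed

lemma is_flow_norm_powr_growth: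
  fixes q :: "complex \<Rightarrow> complex" and w :: complex and m :: nat
  assumes flow: "is_flow sq \<Omega> \<phi>"
    and sq: "continuous_on \<Omega> sq" "\<And>z. z \<in> \<Omega> \<Longrightarrow> sq z ^ 2 = q z" "\<And>z. z \<in> \<Omega> \<Longrightarrow> sq z \<noteq> 0"
    and far: "\<And>z. R \<le> norm z \<Longrightarrow> norm (z ^ m / q z - w ^ 2) \<le> norm w ^ 2 / 4"
    and "0 < R" and x: "x \<in> \<Omega>" "norm x \<le> R"
    and escape: "\<And>s. norm (\<phi> s x) \<le> R \<Longrightarrow> \<bar>s\<bar> \<le> T"
    and "T < \<bar>t\<bar>"
  shows "(real m + 2) / 4 * norm w * (\<bar>t\<bar> - T)
           \<le> norm (\<phi> t x) powr ((real m + 2) / 2) + R powr ((real m + 2) / 2)"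
proof -
  have \<phi>: "\<phi> 0 x = x" "\<And>s. \<phi> s x \<in> \<Omega>"
    "\<And>s. ((\<lambda>s. \<phi> s x) has_vector_derivative 1 / sq (\<phi> s x)) (at s)"
    using flow x unfolding is_flow_def by auto
  have "t \<noteq> 0"
    using escape[of 0] \<phi>(1) x(2) \<open>T < \<bar>t\<bar>\<close> by auto
  \<comment> \<open>For t < 0 use the reversed orbit; it solves the same equation with the branch -sq.\<close>
  define \<epsilon> where "\<epsilon> = sgn t"
  define y where "y s = \<phi> (\<epsilon> * s) x" for s
  define v where "v s = of_real \<epsilon> / sq (y s)" for s
  have \<epsilon>: "\<epsilon> * \<bar>t\<bar> = t" "\<bar>\<epsilon>\<bar> = 1"
    using \<open>t \<noteq> 0\<close> unfolding \<epsilon>_def by (auto simp: sgn_mult_abs)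
  have y_in: "y s \<in> \<Omega>" for s
    unfolding y_def by (rule \<phi>(2))
  have y': "(y has_vector_derivative v s) (at s)" for s
    using vector_diff_chain_at[OF has_vector_derivative_mult_right[OF has_vector_derivative_id] \<phi>(3)]
    unfolding y_def[abs_def] v_def by (simp add: o_def scaleR_conv_of_real)
  then have "continuous_on UNIV y"
    by (metis continuous_on_vector_derivative has_vector_derivative_at_within)
  then have v: "continuous_on UNIV v"
    unfolding v_def using y_in sq(3) by (intro continuous_intros continuous_on_compose2[OF sq(1)]) auto
  have "R < norm (y \<bar>t\<bar>)"
    using escape[of t] \<open>T < \<bar>t\<bar>\<close> unfolding y_def \<epsilon> by fastforce
  then obtain \<tau> where \<tau>: "\<tau> \<in> {0..<\<bar>t\<bar>}" "norm (y \<tau>) = R" "\<And>s. s \<in> {\<tau>..\<bar>t\<bar>} \<Longrightarrow> R \<le> norm (y s)"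
    using last_exit_from_cball[of 0 "\<bar>t\<bar>" y R] \<open>continuous_on UNIV y\<close> \<phi>(1) x(2)
    unfolding y_def by (auto intro: continuous_on_subset)
  have "\<tau> \<le> T"
    using escape[of "\<epsilon> * \<tau>"] \<tau>(1,2) unfolding y_def by (simp add: abs_mult \<epsilon>(2))
  have "(real m + 2) / 4 * norm w * (\<bar>t\<bar> - T) \<le> (real m + 2) / 4 * norm w * (\<bar>t\<bar> - \<tau>)"
    using \<open>\<tau> \<le> T\<close> by (intro mult_left_mono) auto
  also have "\<dots> \<le> norm (y \<bar>t\<bar>) powr ((real m + 2) / 2) + norm (y \<tau>) powr ((real m + 2) / 2)"
  proof (rule norm_powr_linear_growth)
    fix s assume s: "s \<in> {\<tau>..\<bar>t\<bar>}"
    then show "y s \<noteq> 0"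
      using \<tau>(3) \<open>0 < R\<close> by fastforce
    have "y s ^ m * v s ^ 2 = y s ^ m / q (y s)"
      unfolding v_def using sq(2)[OF y_in] \<epsilon>(2) by (simp add: power_divide abs_square_eq_1 flip: of_real_power)
    then show "norm (y s ^ m * v s ^ 2 - w ^ 2) \<le> norm w ^ 2 / 4"
      using far[OF \<tau>(3)[OF s]] by simp
  qed (use \<tau>(1) y' v in \<open>auto intro: has_vector_derivative_at_within continuous_on_subset\<close>)
  also have "y \<bar>t\<bar> = \<phi> t x"
    unfolding y_def \<epsilon> ..
  finally show ?thesis
    unfolding \<tau>(2) .
qed

lemma powr_lower_bound_of_affine_lower_bound:
  fixes a \<gamma> k t0 B t :: real
  assumes "0 < \<gamma>" "0 < k" "0 \<le> a" "0 \<le> t0" "0 \<le> B"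
    and affine: "\<gamma> * (t - t0) - B \<le> a powr k" and t: "2 * t0 + 2 * B / \<gamma> \<le> t"
  shows "(\<gamma> / 2) powr (1 / k) * t powr (1 / k) \<le> a"
proof -
  have "0 \<le> 2 * t0 + 2 * B / \<gamma>"
    using assms(1,4,5) by simp
  then have "0 \<le> t"
    using t by linarith
  have "\<gamma> * t0 + B = \<gamma> / 2 * (2 * t0 + 2 * B / \<gamma>)"
    using \<open>0 < \<gamma>\<close> by (simp add: field_simps)
  also have "\<dots> \<le> \<gamma> / 2 * t"
    using t \<open>0 < \<gamma>\<close> by (intro mult_left_mono) auto
  finally have "\<gamma> / 2 * t \<le> \<gamma> * (t - t0) - B"
    by (simp add: algebra_simps)
  then have "(\<gamma> / 2 * t) powr (1 / k) \<le> (a powr k) powr (1 / k)"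
    using affine assms(1,2) \<open>0 \<le> t\<close> by (intro powr_mono2) auto
  also have "\<dots> = a"
    using assms(2,3) by (simp add: powr_powr)
  also have "(\<gamma> / 2 * t) powr (1 / k) = (\<gamma> / 2) powr (1 / k) * t powr (1 / k)"
    using \<open>0 < \<gamma>\<close> \<open>0 \<le> t\<close> by (intro powr_mult)
  finally show ?thesis .
qed

lemma is_flow_eventually_affine_growth:
  fixes q :: "complex \<Rightarrow> complex" and m :: nat
  assumes flow: "is_flow sq \<Omega> \<phi>"
    and sq: "continuous_on \<Omega> sq" "\<And>z. z \<in> \<Omega> \<Longrightarrow> sq z ^ 2 = q z" "\<And>z. z \<in> \<Omega> \<Longrightarrow> sq z \<noteq> 0"
    and S: "\<And>z. z \<in> \<Omega> \<Longrightarrow> (S has_field_derivative sq z) (at z)" "continuous_on (closure \<Omega>) S"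
    and asymptotic: "((\<lambda>z. z ^ m / q z) \<longlongrightarrow> c) at_infinity" "c \<noteq> 0"
    and K: "compact K" "K \<subseteq> \<Omega>"
  obtains \<gamma> T B where "0 < \<gamma>" "0 \<le> T" "0 \<le> B"
    "\<And>x t. x \<in> K \<Longrightarrow> T < \<bar>t\<bar> \<Longrightarrow> \<gamma> * (\<bar>t\<bar> - T) - B \<le> norm (\<phi> t x) powr ((real m + 2) / 2)"
proof -
  define w where "w = csqrt c"
  have "w ^ 2 = c" "norm w ^ 2 = norm c"
    unfolding w_def by (simp_all flip: norm_power)
  then have "\<forall>\<^sub>F z in at_infinity. norm (z ^ m / q z - w ^ 2) < norm w ^ 2 / 4"
    using asymptotic(1)[unfolded tendsto_iff dist_norm, rule_format, of "norm c / 4"] asymptotic(2)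
    by simp
  then obtain R0 where R0: "\<And>z. R0 \<le> norm z \<Longrightarrow> norm (z ^ m / q z - w ^ 2) \<le> norm w ^ 2 / 4"
    unfolding eventually_at_infinity by (meson less_imp_le)
  obtain B where B: "0 < B" "\<And>x. x \<in> K \<Longrightarrow> norm x \<le> B"
    using compact_imp_bounded[OF K(1)] unfolding bounded_pos by blast
  define R where "R = max R0 B"
  obtain T where T: "0 \<le> T" "\<And>x s. x \<in> K \<Longrightarrow> norm (\<phi> s x) \<le> R \<Longrightarrow> \<bar>s\<bar> \<le> T"
    using is_flow_time_bound_in_ball[OF flow S sq(3) K] by blast
  show thesis
  proof (rule that[of "(real m + 2) / 4 * norm w" T "R powr ((real m + 2) / 2)"])
    fix x t assume x: "x \<in> K" and "T < \<bar>t\<bar>"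
    moreover have "x \<in> \<Omega>" "norm x \<le> R" "0 < R"
      using x K(2) B(1) B(2)[OF x] unfolding R_def by auto
    ultimately have "(real m + 2) / 4 * norm w * (\<bar>t\<bar> - T)
                       \<le> norm (\<phi> t x) powr ((real m + 2) / 2) + R powr ((real m + 2) / 2)"
      using R0 T(2)[OF x] by (intro is_flow_norm_powr_growth[OF flow sq]) (auto simp: R_def)
    then show "(real m + 2) / 4 * norm w * (\<bar>t\<bar> - T) - R powr ((real m + 2) / 2)
                 \<le> norm (\<phi> t x) powr ((real m + 2) / 2)"
      by simp
  qed (use asymptotic(2) T(1) in \<open>auto simp: w_def\<close>)
qed

lemma is_flow_powr_lower_bound:
  fixes q :: "complex \<Rightarrow> complex" and m :: nat
  assumes flow: "is_flow sq \<Omega> \<phi>"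
    and sq: "continuous_on \<Omega> sq" "\<And>z. z \<in> \<Omega> \<Longrightarrow> sq z ^ 2 = q z" "\<And>z. z \<in> \<Omega> \<Longrightarrow> sq z \<noteq> 0"
    and S: "\<And>z. z \<in> \<Omega> \<Longrightarrow> (S has_field_derivative sq z) (at z)" "continuous_on (closure \<Omega>) S"
    and asymptotic: "((\<lambda>z. z ^ m / q z) \<longlongrightarrow> c) at_infinity" "c \<noteq> 0"
    and K: "compact K" "K \<subseteq> \<Omega>"
  obtains C T where "0 < C" "0 < T"
    "\<And>x t. x \<in> K \<Longrightarrow> T \<le> \<bar>t\<bar> \<Longrightarrow> C * \<bar>t\<bar> powr (2 / (real m + 2)) \<le> norm (\<phi> t x)"
proof -
  obtain \<gamma> T B where "0 < \<gamma>" "0 \<le> T" "0 \<le> B" and growth: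
    "\<And>x t. x \<in> K \<Longrightarrow> T < \<bar>t\<bar> \<Longrightarrow> \<gamma> * (\<bar>t\<bar> - T) - B \<le> norm (\<phi> t x) powr ((real m + 2) / 2)"
    using is_flow_eventually_affine_growth[OF assms] by blast
  define T' where "T' = 2 * T + 2 * B / \<gamma> + 1"
  have "0 \<le> B / \<gamma>"
    using \<open>0 < \<gamma>\<close> \<open>0 \<le> B\<close> by simp
  then have "T < T'" "0 < T'"
    using \<open>0 \<le> T\<close> unfolding T'_def by linarith+
  show thesis
  proof (rule that[of "(\<gamma> / 2) powr (2 / (real m + 2))" T'])
    fix x t assume "x \<in> K" "T' \<le> \<bar>t\<bar>"
    moreover have "2 * T + 2 * B / \<gamma> \<le> \<bar>t\<bar>"
      using \<open>T' \<le> \<bar>t\<bar>\<close> unfolding T'_def by simp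
    ultimately show "(\<gamma> / 2) powr (2 / (real m + 2)) * \<bar>t\<bar> powr (2 / (real m + 2)) \<le> norm (\<phi> t x)"
      using powr_lower_bound_of_affine_lower_bound[OF \<open>0 < \<gamma>\<close> _ norm_ge_zero \<open>0 \<le> T\<close> \<open>0 \<le> B\<close>
          growth[OF \<open>x \<in> K\<close>]] \<open>T < T'\<close> by simp
  qed (use \<open>0 < \<gamma>\<close> \<open>0 < T'\<close> in auto)
qed

theorem proposition4p1:
  fixes Q :: "complex poly" and m :: nat and \<Omega> K :: "complex set" and a :: complex
    and sq S :: "complex \<Rightarrow> complex" and \<phi> :: "real \<Rightarrow> complex \<Rightarrow> complex"
  assumes deg: "degree Q = m" "m \<ge> 1"
    and dom: "stokes_domain Q \<Omega>"
    and a: "turning_point Q a" "a \<in> frontier \<Omega>"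
    and branch: "sq holomorphic_on \<Omega>" "\<forall>x\<in>\<Omega>. (sq x)\<^sup>2 = poly Q x"
    and prim: "S holomorphic_on \<Omega>" "\<forall>x\<in>\<Omega>. (S has_field_derivative sq x) (at x)"
      "continuous_on (closure \<Omega>) S" "S a = 0"
    and pos: "\<forall>x\<in>\<Omega>. Im (S x) > 0"
    and types:
      "(connected (frontier \<Omega>) \<and> (\<forall>y\<in>frontier \<Omega>. Im (S y) = 0))
       \<or> (\<exists>C1 C2 b. frontier \<Omega> = C1 \<union> C2 \<and> C1 \<inter> C2 = {} \<and>
            connected C1 \<and> connected C2 \<and> a \<in> C1 \<and> b \<in> C2 \<and> turning_point Q b \<and>
            (\<forall>y\<in>C1. Im (S y) = 0) \<and> (\<forall>y\<in>C2. Im (S y) = Im (S b)))"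
    and flow: "is_flow sq \<Omega> \<phi>"
    and K: "compact K" "K \<subseteq> \<Omega>"
  shows "\<exists>C T. C > 0 \<and> T > 0 \<and>
           (\<forall>x\<in>K. \<forall>t::real. \<bar>t\<bar> \<ge> T \<longrightarrow>
              cmod (\<phi> t x) \<ge> C * \<bar>t\<bar> powr (2 / (real m + 2)))"
proof -
  have sq_nonzero: "sq z \<noteq> 0" if "z \<in> \<Omega>" for z
    using branch(2) stokes_domain_avoids_turning_points[OF dom that] that by fastforce
  have "lead_coeff Q \<noteq> 0"
    using deg by auto
  obtain C T where "0 < C" "0 < T"
    "\<And>x t. x \<in> K \<Longrightarrow> T \<le> \<bar>t\<bar> \<Longrightarrow> C * \<bar>t\<bar> powr (2 / (real m + 2)) \<le> norm (\<phi> t x)"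
  proof (rule is_flow_powr_lower_bound[OF flow holomorphic_on_imp_continuous_on[OF branch(1)] _ sq_nonzero _ prim(3)
        poly_power_ratio_tendsto[of Q, unfolded deg(1)] _ K])
  qed (use branch(2) prim(2) \<open>lead_coeff Q \<noteq> 0\<close> deg(1) in auto)
  then show ?thesis
    by blast
qed

end
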